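(* Let $N\geq 2$ be an integer. For real $\theta$ and $\varepsilon\geq 0$ let $$G_\theta(\varepsilon)=(1+\theta)^N+\big(1-\theta(1+\varepsilon)\big)^N-2,$$ and define the critical uncertainty bound $\varepsilon_c(\theta)=\inf\{\varepsilon>0: G_\theta(\varepsilon)\leq 0\}$, with the convention $\inf\emptyset=+\infty$. Then for every $\theta>0$, $$\varepsilon_c(\theta)=\begin{cases}+\infty, & N\text{ even and }\theta>2^{1/N}-1,\\[3pt] \dfrac{1-\big(2-(1+\theta)^N\big)^{1/N}}{\theta}-1, & \text{otherwise.}\end{cases}$$
   Context: Root convention: for real $X>0$ and positive integer $N$, $X^{1/N}$ denotes the unique positive real $N$-th root; for $X<0$ and $N$ odd, $X^{1/N}=-|X|^{1/N}$; for $X=0$, $X^{1/N}=0$. (The case $X<0$ with $N$ even does not arise in the formula.) *)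

theory Defs
  imports Complex_Main "HOL-Library.Extended_Real"
begin

definition G :: "nat \<Rightarrow> real \<Rightarrow> real \<Rightarrow> real" where
  "G N \<theta> \<epsilon> = (1 + \<theta>) ^ N + (1 - \<theta> * (1 + \<epsilon>)) ^ N - 2"

text \<open>Critical uncertainty bound: infimum in the extended reals, so Inf of the empty set is +infinity.\<close>
definition eps_c :: "nat \<Rightarrow> real \<Rightarrow> ereal" where
  "eps_c N \<theta> = Inf (ereal ` {\<epsilon>. \<epsilon> > 0 \<and> G N \<theta> \<epsilon> \<le> 0})"

end

theory Submission
  imports Defs
begin

text \<open>
  Substituting \<open>u = 1 - \<theta> (1 + \<epsilon>)\<close>, an affine and decreasing change of variables,
  the condition \<open>\<epsilon> > 0\<close> becomes \<open>u < 1 - \<theta>\<close> and \<open>G\<^sub>\<theta>(\<epsilon>) \<le> 0\<close> becomes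
  \<open>u\<^sup>N \<le> c\<close> with \<open>c = 2 - (1 + \<theta>)\<^sup>N\<close>. So \<open>\<epsilon>\<^sub>c\<close> corresponds to the largest
  solution \<open>u = c\<^sup>1\<^sup>/\<^sup>N\<close> of \<open>u\<^sup>N \<le> c\<close>, which exists unless \<open>N\<close> is even and
  \<open>c < 0\<close>. The constraint \<open>u < 1 - \<theta>\<close> is then automatically satisfied because
  \<open>(1 + \<theta>)\<^sup>N + (1 - \<theta>)\<^sup>N > 2\<close>.
\<close>

lemma one_plus_power_add_one_minus_power_gt_two:
  fixes t :: real
  assumes "N \<ge> 2" and "t \<noteq> 0"
  shows "(1 + t) ^ N + (1 - t) ^ N > 2"
proof -
  define f where "f k = real (N choose k) * (t ^ k + (-t) ^ k)" for k
  have "(1 + t) ^ N + (1 - t) ^ N = (\<Sum>k\<le>N. f k)"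
    using binomial_ring[of t 1 N] binomial_ring[of "-t" 1 N]
    by (simp add: f_def sum.distrib[symmetric] algebra_simps)
  moreover have "(\<Sum>k\<in>{0,2}. f k) \<le> (\<Sum>k\<le>N. f k)"
  proof (rule sum_mono2)
    show "f k \<ge> 0" for k
      by (cases "even k") (simp_all add: f_def zero_le_even_power)
  qed (use assms(1) in auto)
  moreover have "(\<Sum>k\<in>{0,2::nat}. f k) = 2 + real (N choose 2) * (2 * t\<^sup>2)"
    by (simp add: f_def)
  moreover have "real (N choose 2) * (2 * t\<^sup>2) > 0"
    using assms by simp
  ultimately show ?thesis
    by linarith
qed

lemma root_minus_one_less_iff:
  fixes \<theta> :: real
  assumes "N > 0" and "\<theta> > -1"
  shows "root N x - 1 < \<theta> \<longleftrightarrow> x < (1 + \<theta>) ^ N"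
proof -
  have "root N ((1 + \<theta>) ^ N) = 1 + \<theta>"
    using assms by (intro real_root_power_cancel) auto
  then show ?thesis
    using real_root_less_iff[OF assms(1), of x "(1 + \<theta>) ^ N"] by linarith
qed

lemma odd_power_le_iff_le_root:
  fixes u :: real
  assumes "odd N"
  shows "u ^ N \<le> c \<longleftrightarrow> u \<le> root N c"
  using real_root_le_iff[of N "u ^ N" c] assms
  by (simp add: odd_pos odd_real_root_power_cancel)

lemma even_power_le_imp_abs_le_root:
  fixes u :: real
  assumes "even N" and "N > 0" and "u ^ N \<le> c"
  shows "\<bar>u\<bar> \<le> root N c"
proof -
  have "\<bar>u\<bar> = root N (u ^ N)"
    using root_abs_power[OF assms(2), of u] assms(1,2)
    by (simp add: zero_le_even_power)
  also have "\<dots> \<le> root N c"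
    using assms by simp
  finally show ?thesis .
qed

lemma eps_c_eq_infinity:
  assumes "even N" and "2 < (1 + \<theta>) ^ N"
  shows "eps_c N \<theta> = \<infinity>"
proof -
  have "\<not> G N \<theta> \<epsilon> \<le> 0" for \<epsilon>
    using assms zero_le_even_power[OF assms(1), of "1 - \<theta> * (1 + \<epsilon>)"]
    by (simp add: G_def)
  then show ?thesis
    by (simp add: eps_c_def top_ereal_def)
qed

lemma eps_c_eq_of_greatest_solution:
  fixes \<theta> r :: real
  assumes "\<theta> > 0" and "r < 1 - \<theta>" and "r ^ N = 2 - (1 + \<theta>) ^ N"
    and greatest: "\<And>u. u ^ N \<le> 2 - (1 + \<theta>) ^ N \<Longrightarrow> u \<le> r"
  shows "eps_c N \<theta> = ereal ((1 - r) / \<theta> - 1)"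
proof -
  define e0 where "e0 = (1 - r) / \<theta> - 1"
  have u0: "1 - \<theta> * (1 + e0) = r"
    using assms(1) by (simp add: e0_def field_simps)
  have "e0 > 0"
    using assms(1,2) by (simp add: e0_def field_simps)
  moreover have "G N \<theta> e0 \<le> 0"
    using assms(3) by (simp add: G_def u0)
  moreover have "e0 \<le> \<epsilon>" if "G N \<theta> \<epsilon> \<le> 0" for \<epsilon>
  proof -
    have "1 - \<theta> * (1 + \<epsilon>) \<le> 1 - \<theta> * (1 + e0)"
      using greatest[of "1 - \<theta> * (1 + \<epsilon>)"] that u0 by (simp add: G_def)
    then show ?thesis
      using assms(1) by simp
  qed
  ultimately show ?thesis
    unfolding eps_c_def e0_def[symmetric] by (intro cInf_eq_minimum) auto
qed

lemma two_minus_power_less_power: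
  fixes \<theta> :: real
  assumes "N \<ge> 2" and "\<theta> > 0"
  shows "2 - (1 + \<theta>) ^ N < (1 - \<theta>) ^ N"
  using one_plus_power_add_one_minus_power_gt_two[OF assms(1), of \<theta>] assms(2) by simp

lemma eps_c_eq_root_odd:
  fixes \<theta> :: real
  assumes "odd N" and "N \<ge> 2" and "\<theta> > 0"
  shows "eps_c N \<theta> = ereal ((1 - root N (2 - (1 + \<theta>) ^ N)) / \<theta> - 1)"
proof (rule eps_c_eq_of_greatest_solution)
  show "root N (2 - (1 + \<theta>) ^ N) < 1 - \<theta>"
    using two_minus_power_less_power[OF assms(2,3)]
      odd_power_le_iff_le_root[OF assms(1), of "1 - \<theta>" "2 - (1 + \<theta>) ^ N"]
    by simp
  show "u \<le> root N (2 - (1 + \<theta>) ^ N)" if "u ^ N \<le> 2 - (1 + \<theta>) ^ N" for u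
    using that odd_power_le_iff_le_root[OF assms(1)] by simp
qed (use assms in \<open>simp_all add: odd_real_root_pow\<close>)

lemma eps_c_eq_root_even:
  fixes \<theta> :: real
  assumes "even N" and "N \<ge> 2" and "\<theta> > 0" and "(1 + \<theta>) ^ N \<le> 2"
  shows "eps_c N \<theta> = ereal ((1 - root N (2 - (1 + \<theta>) ^ N)) / \<theta> - 1)"
proof -
  define c where "c = 2 - (1 + \<theta>) ^ N"
  have N0: "N > 0"
    using assms(2) by simp
  have "\<theta> < 1"
  proof (rule ccontr)
    assume "\<not> \<theta> < 1"
    have "(2::real) ^ 2 \<le> 2 ^ N"
      using assms(2) by (intro power_increasing) auto
    also have "\<dots> \<le> (1 + \<theta>) ^ N"
      using \<open>\<not> \<theta> < 1\<close> by (intro power_mono) auto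
    finally show False
      using assms(4) by simp
  qed
  have root_power: "root N c ^ N = c"
    using assms(4) N0 by (simp add: c_def)
  then have "root N c ^ N < (1 - \<theta>) ^ N"
    using two_minus_power_less_power[OF assms(2,3)] by (simp add: c_def)
  then have root_less: "root N c < 1 - \<theta>"
    by (rule power_less_imp_less_base) (use \<open>\<theta> < 1\<close> in simp)
  have greatest: "u \<le> root N c" if "u ^ N \<le> c" for u
    using abs_ge_self[of u] even_power_le_imp_abs_le_root[OF assms(1) N0 that] by linarith
  from assms(3) root_less root_power greatest show ?thesis
    unfolding c_def by (rule eps_c_eq_of_greatest_solution)
qed

theorem lemma1:
  fixes N :: nat and \<theta> :: real
  assumes "N \<ge> 2" and "\<theta> > 0"
  shows "eps_c N \<theta> =
    (if even N \<and> \<theta> > root N 2 - 1 then \<infinity>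
     else ereal ((1 - root N (2 - (1 + \<theta>) ^ N)) / \<theta> - 1))"
proof -
  have threshold: "root N 2 - 1 < \<theta> \<longleftrightarrow> 2 < (1 + \<theta>) ^ N"
    using assms by (intro root_minus_one_less_iff) auto
  consider "even N" "2 < (1 + \<theta>) ^ N" | "even N" "(1 + \<theta>) ^ N \<le> 2" | "odd N"
    by fastforce
  then show ?thesis
  proof cases
    case 1
    then show ?thesis
      using eps_c_eq_infinity threshold by simp
  next
    case 2
    then show ?thesis
      using eps_c_eq_root_even[OF _ assms] threshold by simp
  next
    case 3
    then show ?thesis
      using eps_c_eq_root_odd[OF _ assms] by simp
  qed
qed

end
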